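(* Let $n\ge1$ and let $\alpha=(a_n,\ldots,a_1)$ and $\beta=(b_n,\ldots,b_1)$ be restricted sequences of length $n$. (i) If $\beta<\alpha$ in the lexicographic order, then $\langle e_\beta,e'_\alpha\rangle_n=0$. (ii) $\langle e_\alpha,e'_\alpha\rangle_n=\dfrac{\Delta_{a_n}}{\Delta_{a_n-1}}\cdots\dfrac{\Delta_{a_1}}{\Delta_{a_1-1}}$.
   Context: A non-crossing $n$-chord diagram is (the isotopy class of) a set of $n$ pairwise disjoint arcs in the closed upper half-plane with endpoints at $1,2,\ldots,2n$; equivalently a non-crossing perfect matching of $\{1,\ldots,2n\}$. Let $D_n$ be the set of these ($D_0=\{\phi\}$). For $1\le k\le 2n+1$, $l_k:D_n\to D_{n+1}$: $l_k(\alpha)$ matches $k$ with $k+1$, and each old point $i$ becomes $i$ if $i<k$ and $i+2$ if $i\ge k$, old pairs kept. For $\alpha\in D_n$ ($n\ge1$) let $k_n$ be the smallest $k$ with $k$ matched to $k+1$, and $\alpha'\in D_{n-1}$ be $\alpha$ with that arc removed (renumbered), so $\alpha=l_{k_n}(\alpha')$. The restricted sequence of $\alpha$ is $(k_n,\ldots,k_1)$ with $(k_{n-1},\ldots,k_1)$ the restricted sequence of $\alpha'$. This is a bijection from $D_n$ to restricted sequences of length $n$; $e_{(a_n,\ldots,a_1)}$ denotes the corresponding diagram. Lexicographic order: $(b_n,\ldots,b_1)<(a_n,\ldots,a_1)$ if at the largest index $i$ with $b_i\ne a_i$ one has $b_i<a_i$. $V_n$ is the $\mathbb{Q}(q)$-vector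 space with basis $D_n$ ($q$ an indeterminate), $l_k$ extended linearly. The Markov form is the bilinear extension of $\langle\alpha,\beta\rangle_n=q^c$, $c$ the number of closed curves obtained by gluing $\alpha$ to the mirror image of $\beta$ in the lower half-plane along $1,\ldots,2n$. $\Delta_{-1}=0$, $\Delta_0=1$, $\Delta_k=q\Delta_{k-1}-\Delta_{k-2}$ ($k\ge1$). $e'$: $e'_{(1)}=e_{(1)}$; for $n\ge2$, $e'_{(a_n,\ldots,a_1)}=l_{a_n}(e'_{(a_{n-1},\ldots,a_1)})-\frac{\Delta_{a_n-2}}{\Delta_{a_n-1}}e'_{(a_n-1,a_{n-1},\ldots,a_1)}$ if $a_n\ge2$, and $e'_{(1,a_{n-1},\ldots,a_1)}=l_1(e'_{(a_{n-1},\ldots,a_1)})$. *)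

theory Defs
  imports Main "HOL-Computational_Algebra.Polynomial" "HOL-Computational_Algebra.Fraction_Field"
begin

(* Chord diagrams: a diagram is a symmetric relation M on nat (the set of matched
   pairs, both orientations), i.e. a non-crossing perfect matching of {1..2n}. *)

type_synonym diagram = "(nat \<times> nat) set"

definition perfect_matching :: "nat \<Rightarrow> diagram \<Rightarrow> bool" where
  "perfect_matching n M \<longleftrightarrow>
     M \<subseteq> {1..2*n} \<times> {1..2*n} \<and> sym M \<and> (\<forall>i. (i, i) \<notin> M) \<and>
     (\<forall>i\<in>{1..2*n}. \<exists>!j. (i, j) \<in> M)"

definition non_crossing :: "diagram \<Rightarrow> bool" where
  "non_crossing M \<longleftrightarrow> (\<forall>a b c d. (a, b) \<in> M \<longrightarrow> (c, d) \<in> M \<longrightarrow> \<not> (a < c \<and> c < b \<and> b < d))"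

definition D :: "nat \<Rightarrow> diagram set" where
  "D n = {M. perfect_matching n M \<and> non_crossing M}"

definition shift :: "nat \<Rightarrow> nat \<Rightarrow> nat" where
  "shift k i = (if i < k then i else i + 2)"

definition l :: "nat \<Rightarrow> diagram \<Rightarrow> diagram" where
  "l k M = {(k, k + 1), (k + 1, k)} \<union> (\<lambda>(i, j). (shift k i, shift k j)) ` M"

definition unshift :: "nat \<Rightarrow> nat \<Rightarrow> nat" where
  "unshift k i = (if i < k then i else i - 2)"

definition remove_arc :: "nat \<Rightarrow> diagram \<Rightarrow> diagram" where
  "remove_arc k M = (\<lambda>(i, j). (unshift k i, unshift k j)) `
      {(i, j) \<in> M. i \<notin> {k, k + 1} \<and> j \<notin> {k, k + 1}}"

(* restricted sequence (k_n,...,k_1), stored as the list [k_n, ..., k_1] *)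
fun rseq :: "nat \<Rightarrow> diagram \<Rightarrow> nat list" where
  "rseq 0 M = []"
| "rseq (Suc m) M =
     (let k = (LEAST k. (k, k + 1) \<in> M) in k # rseq m (remove_arc k M))"

definition restricted :: "nat \<Rightarrow> nat list \<Rightarrow> bool" where
  "restricted n s \<longleftrightarrow> (\<exists>M\<in>D n. rseq n M = s)"

definition e :: "nat list \<Rightarrow> diagram" where
  "e s = (THE M. M \<in> D (length s) \<and> rseq (length s) M = s)"

(* lexicographic order: compare at the largest index where the sequences differ,
   i.e. at the first differing list position *)
definition lex_less :: "nat list \<Rightarrow> nat list \<Rightarrow> bool" where
  "lex_less b a \<longleftrightarrow> length b = length a \<and>
     (\<exists>i < length a. take i b = take i a \<and> b ! i < a ! i)"

type_synonym K = "rat poly fract"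

definition q :: K where
  "q = Fract [:0, 1:] 1"

fun Delta :: "nat \<Rightarrow> K" where
  "Delta 0 = 1"
| "Delta (Suc 0) = q"
| "Delta (Suc (Suc k)) = q * Delta (Suc k) - Delta k"

(* vectors in V_n: coefficient functions on diagrams (supported on D n) *)
type_synonym vec = "diagram \<Rightarrow> K"

definition basis :: "diagram \<Rightarrow> vec" where
  "basis M = (\<lambda>N. if N = M then 1 else 0)"

(* linear extension of l_k (l_k is injective) *)
definition lin_l :: "nat \<Rightarrow> vec \<Rightarrow> vec" where
  "lin_l k v = (\<lambda>N. \<Sum>M\<in>{M. l k M = N}. v M)"

(* number of closed curves obtained by gluing M with the mirror image of N *)
definition loops :: "nat \<Rightarrow> diagram \<Rightarrow> diagram \<Rightarrow> nat" where
  "loops n M N = card ({1..2*n} // ((M \<union> N)\<^sup>* \<inter> ({1..2*n} \<times> {1..2*n})))"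

definition markov :: "nat \<Rightarrow> vec \<Rightarrow> vec \<Rightarrow> K" where
  "markov n v w = (\<Sum>M\<in>D n. \<Sum>N\<in>D n. v M * w N * q ^ loops n M N)"

function e' :: "nat list \<Rightarrow> vec" where
  "e' [] = basis {}"
| "e' [a] = basis (e [a])"
| "e' (a # b # rest) =
     (if 2 \<le> a
      then (\<lambda>N. lin_l a (e' (b # rest)) N
                 - (Delta (a - 2) / Delta (a - 1)) * e' ((a - 1) # b # rest) N)
      else lin_l 1 (e' (b # rest)))"
  by pat_completeness auto
termination
  by (relation "measures [length, hd]") auto

end

theory Submission
  imports Defs "HOL-Computational_Algebra.Polynomial_Factorial"
begin

(* Inserting an arc and capping two neighbouring points are adjoint for the Markov form:
   <z, l_k N> = q^c <cap_k z, N>, where c = 1 if (k, k + 1) is an arc of z and c = 0 otherwise,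
   because gluing z to l_k N yields the loops of cap_k z glued to N, plus the small loop through
   k and k + 1 when z has that arc. Together with the recursion defining e', this expresses the
   pairing of l_i z with e'_(b, alpha) by pairings with e'_(b - 1, alpha) and pairings in one
   dimension less. An induction on n, strengthened by the orthogonality of e'_alpha to every l_i z
   with i < a_n, then yields both statements; on the diagonal the coefficient
   q - Delta_(b-2) / Delta_(b-1) of e' becomes Delta_b / Delta_(b-1) by the recurrence of Delta. *)

section \<open>Chord diagrams\<close>

lemma shift_neq: "shift k i \<noteq> k" "shift k i \<noteq> Suc k"
  by (auto simp: shift_def)

lemma unshift_shift [simp]: "unshift k (shift k i) = i"
  by (auto simp: shift_def unshift_def)

lemma shift_unshift: "i \<noteq> k \<Longrightarrow> i \<noteq> Suc k \<Longrightarrow> shift k (unshift k i) = i"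
  by (auto simp: shift_def unshift_def)

lemma shift_eq_iff [simp]: "shift k i = shift k j \<longleftrightarrow> i = j"
  by (auto simp: shift_def)

lemma shift_less_iff [simp]: "shift k i < shift k j \<longleftrightarrow> i < j"
  by (auto simp: shift_def)

lemma mem_l_iff: "(u, v) \<in> l k M \<longleftrightarrow> (u = k \<and> v = Suc k) \<or> (u = Suc k \<and> v = k) \<or>
   (u \<noteq> k \<and> u \<noteq> Suc k \<and> v \<noteq> k \<and> v \<noteq> Suc k \<and> (unshift k u, unshift k v) \<in> M)"
proof -
  have "(u, v) \<in> (\<lambda>(i, j). (shift k i, shift k j)) ` M \<longleftrightarrow>
        u \<noteq> k \<and> u \<noteq> Suc k \<and> v \<noteq> k \<and> v \<noteq> Suc k \<and> (unshift k u, unshift k v) \<in> M"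
    by (force simp: shift_neq shift_unshift
              intro: image_eqI[where x = "(unshift k u, unshift k v)"])
  then show ?thesis by (auto simp: l_def)
qed

lemma mem_remove_arc_iff: "(u, v) \<in> remove_arc k M \<longleftrightarrow> (shift k u, shift k v) \<in> M"
  by (force simp: remove_arc_def shift_neq shift_unshift
            intro: image_eqI[where x = "(shift k u, shift k v)"])

lemma remove_arc_l [simp]: "remove_arc k (l k M) = M"
  by (auto simp: mem_remove_arc_iff mem_l_iff shift_neq)

lemma l_eq_iff [simp]: "l k M = l k N \<longleftrightarrow> M = N"
  by (metis remove_arc_l)

(* Joins the partners of k and k + 1 by an arc, then deletes the points k and k + 1. *)
definition cap :: "nat \<Rightarrow> diagram \<Rightarrow> diagram" where
  "cap k M = remove_arc k (M \<union> {(x, y). (k, x) \<in> M \<and> (Suc k, y) \<in> M}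
                              \<union> {(y, x). (k, x) \<in> M \<and> (Suc k, y) \<in> M})"

lemma mem_cap_iff: "(u, v) \<in> cap k M \<longleftrightarrow> (shift k u, shift k v) \<in> M \<or>
   ((k, shift k u) \<in> M \<and> (Suc k, shift k v) \<in> M) \<or> ((k, shift k v) \<in> M \<and> (Suc k, shift k u) \<in> M)"
  unfolding cap_def mem_remove_arc_iff by auto

lemma finite_D: "finite (D n)"
proof (rule finite_subset)
  show "D n \<subseteq> Pow ({1..2*n} \<times> {1..2*n})"
    by (auto simp: D_def perfect_matching_def)
qed simp

lemma D_0: "D 0 = {{}}"
  by (auto simp: D_def perfect_matching_def non_crossing_def sym_def)

context
  fixes n M assumes M: "M \<in> D n"
begin

lemma D_bounds: "(u, v) \<in> M \<Longrightarrow> 1 \<le> u \<and> u \<le> 2*n \<and> 1 \<le> v \<and> v \<le> 2*n"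
  using M by (auto simp: D_def perfect_matching_def)

lemma D_irrefl: "(u, v) \<in> M \<Longrightarrow> u \<noteq> v"
  using M unfolding D_def perfect_matching_def by blast

lemma D_sym: "(u, v) \<in> M \<Longrightarrow> (v, u) \<in> M"
  using M by (auto simp: D_def perfect_matching_def sym_def)

lemma D_partner_unique: "(u, v) \<in> M \<Longrightarrow> (u, w) \<in> M \<Longrightarrow> v = w"
proof -
  assume uv: "(u, v) \<in> M" and uw: "(u, w) \<in> M"
  then have "\<exists>!j. (u, j) \<in> M"
    using M D_bounds unfolding D_def perfect_matching_def by auto
  with uv uw show "v = w" by blast
qed

lemma D_partner_exists: "1 \<le> u \<Longrightarrow> u \<le> 2*n \<Longrightarrow> \<exists>v. (u, v) \<in> M"
  using M unfolding D_def perfect_matching_def by auto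

lemma D_non_crossing: "(a, b) \<in> M \<Longrightarrow> (c, d) \<in> M \<Longrightarrow> a < c \<Longrightarrow> c < b \<Longrightarrow> b < d \<Longrightarrow> False"
  using M unfolding D_def non_crossing_def by blast

lemma sym_D: "sym M"
  using D_sym by (auto intro: symI)

end

lemma DI:
  assumes "\<And>u v. (u, v) \<in> M \<Longrightarrow> 1 \<le> u \<and> u \<le> 2*n \<and> 1 \<le> v \<and> v \<le> 2*n"
    and "\<And>u v. (u, v) \<in> M \<Longrightarrow> (v, u) \<in> M"
    and "\<And>u. (u, u) \<notin> M"
    and "\<And>u v w. (u, v) \<in> M \<Longrightarrow> (u, w) \<in> M \<Longrightarrow> v = w"
    and "\<And>u. 1 \<le> u \<Longrightarrow> u \<le> 2*n \<Longrightarrow> \<exists>v. (u, v) \<in> M"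
    and "\<And>a b c d. (a, b) \<in> M \<Longrightarrow> (c, d) \<in> M \<Longrightarrow> a < c \<Longrightarrow> c < b \<Longrightarrow> b < d \<Longrightarrow> False"
  shows "M \<in> D n"
proof -
  have "\<forall>i\<in>{1..2*n}. \<exists>!j. (i, j) \<in> M"
    using assms(4,5) by (metis atLeastAtMost_iff)
  moreover have "M \<subseteq> {1..2*n} \<times> {1..2*n}"
    using assms(1) by fastforce
  ultimately show ?thesis
    unfolding D_def perfect_matching_def non_crossing_def sym_def using assms(2,3,6) by blast
qed

lemma D_same_side:
  assumes M: "M \<in> D n" and uv: "(u, v) \<in> M" and cd: "(c, d) \<in> M" "c < d"
    and "u \<notin> {c, d}" "v \<notin> {c, d}"
  shows "c < u \<and> u < d \<longleftrightarrow> c < v \<and> v < d"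
proof -
  have False if "c < x" "x < d" "\<not> (c < y \<and> y < d)" "(x, y) \<in> M" "y \<notin> {c, d}" for x y
  proof -
    have "y < c \<or> d < y" using that by auto
    then show False
      using D_non_crossing[OF M D_sym[OF M \<open>(x, y) \<in> M\<close>] cd(1)]
        D_non_crossing[OF M cd(1) \<open>(x, y) \<in> M\<close>] that by auto
  qed
  then show ?thesis using uv D_sym[OF M uv] assms(5,6) by blast
qed

lemma l_in_D:
  assumes M: "M \<in> D n" and k: "1 \<le> k" "k \<le> 2*n + 1"
  shows "l k M \<in> D (Suc n)"
proof (rule DI)
  fix u v assume "(u, v) \<in> l k M"
  then show "1 \<le> u \<and> u \<le> 2 * Suc n \<and> 1 \<le> v \<and> v \<le> 2 * Suc n"
    using k D_bounds[OF M, of "unshift k u" "unshift k v"] unfolding mem_l_iff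
    by (auto simp: unshift_def split: if_splits)
next
  fix u v assume "(u, v) \<in> l k M"
  then show "(v, u) \<in> l k M" using D_sym[OF M] unfolding mem_l_iff by auto
next
  fix u show "(u, u) \<notin> l k M" using D_irrefl[OF M] unfolding mem_l_iff by auto
next
  fix u v w assume "(u, v) \<in> l k M" "(u, w) \<in> l k M"
  then show "v = w" using D_partner_unique[OF M] unfolding mem_l_iff by (metis shift_unshift)
next
  fix u assume u: "1 \<le> u" "u \<le> 2 * Suc n"
  show "\<exists>v. (u, v) \<in> l k M"
  proof (cases "u = k \<or> u = Suc k")
    case False
    then have "1 \<le> unshift k u" "unshift k u \<le> 2*n" using u k by (auto simp: unshift_def)
    then obtain w where "(unshift k u, w) \<in> M" using D_partner_exists[OF M] by blast
    then have "(u, shift k w) \<in> l k M" using False unfolding mem_l_iff by (auto simp: shift_neq)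
    then show ?thesis by blast
  qed (auto simp: mem_l_iff)
next
  fix a b c d assume arcs: "(a, b) \<in> l k M" "(c, d) \<in> l k M" and "a < c" "c < b" "b < d"
  show False
  proof (cases "{a, b, c, d} \<inter> {k, Suc k} = {}")
    case True
    then have "(unshift k a, unshift k b) \<in> M" "(unshift k c, unshift k d) \<in> M"
      using arcs unfolding mem_l_iff by auto
    moreover have "unshift k a < unshift k c" "unshift k c < unshift k b" "unshift k b < unshift k d"
      using \<open>a < c\<close> \<open>c < b\<close> \<open>b < d\<close> True by (auto simp: unshift_def)
    ultimately show False using D_non_crossing[OF M] by blast
  next
    case False
    then show False using arcs \<open>a < c\<close> \<open>c < b\<close> \<open>b < d\<close> unfolding mem_l_iff by auto
  qed
qed

lemma
  assumes M: "M \<in> D (Suc n)" and k: "(k, Suc k) \<in> M"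
  shows remove_arc_in_D: "remove_arc k M \<in> D n"
    and l_remove_arc: "l k (remove_arc k M) = M"
proof -
  have kb: "1 \<le> k" "Suc k \<le> 2 * Suc n" using D_bounds[OF M k] by auto
  have partner_k: "(k, v) \<in> M \<longleftrightarrow> v = Suc k" "(Suc k, v) \<in> M \<longleftrightarrow> v = k"
    "(v, k) \<in> M \<longleftrightarrow> v = Suc k" "(v, Suc k) \<in> M \<longleftrightarrow> v = k" for v
    using D_partner_unique[OF M] D_sym[OF M] k by blast+
  show "remove_arc k M \<in> D n"
  proof (rule DI)
    fix u v assume "(u, v) \<in> remove_arc k M"
    then have uv: "(shift k u, shift k v) \<in> M" by (simp add: mem_remove_arc_iff)
    then show "1 \<le> u \<and> u \<le> 2*n \<and> 1 \<le> v \<and> v \<le> 2*n"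
      using D_bounds[OF M uv] kb partner_k shift_neq by (auto simp: shift_def split: if_splits)
  next
    fix u v assume "(u, v) \<in> remove_arc k M"
    then show "(v, u) \<in> remove_arc k M" using D_sym[OF M] by (simp add: mem_remove_arc_iff)
  next
    fix u show "(u, u) \<notin> remove_arc k M" using D_irrefl[OF M] by (auto simp: mem_remove_arc_iff)
  next
    fix u v w assume "(u, v) \<in> remove_arc k M" "(u, w) \<in> remove_arc k M"
    then show "v = w"
      using D_partner_unique[OF M, of "shift k u" "shift k v" "shift k w"]
      by (simp add: mem_remove_arc_iff)
  next
    fix u assume u: "1 \<le> u" "u \<le> 2*n"
    have "1 \<le> shift k u" "shift k u \<le> 2 * Suc n" using u kb by (auto simp: shift_def)
    then obtain w where w: "(shift k u, w) \<in> M" using D_partner_exists[OF M] by blast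
    have "w \<noteq> k" "w \<noteq> Suc k" using w partner_k shift_neq by auto
    then have "(u, unshift k w) \<in> remove_arc k M" using w by (simp add: mem_remove_arc_iff shift_unshift)
    then show "\<exists>v. (u, v) \<in> remove_arc k M" by blast
  next
    fix a b c d assume "(a, b) \<in> remove_arc k M" "(c, d) \<in> remove_arc k M" "a < c" "c < b" "b < d"
    then show False
      using D_non_crossing[OF M, of "shift k a" "shift k b" "shift k c" "shift k d"]
      by (simp add: mem_remove_arc_iff)
  qed
  show "l k (remove_arc k M) = M"
  proof (intro set_eqI, clarify)
    fix a b
    show "(a, b) \<in> l k (remove_arc k M) \<longleftrightarrow> (a, b) \<in> M"
    proof (cases "{a, b} \<inter> {k, Suc k} = {}")
      case True
      then show ?thesis unfolding mem_l_iff mem_remove_arc_iff by (simp add: shift_unshift)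
    qed (unfold mem_l_iff, use partner_k in auto)
  qed
qed

text \<open>An arc of minimal length joins neighbouring points: otherwise the partner of the point
  next to its left end would give a shorter arc, by non-crossing.\<close>

lemma D_Suc_has_adjacent_arc:
  assumes M: "M \<in> D (Suc n)"
  shows "\<exists>k. (k, Suc k) \<in> M"
proof -
  obtain v where v: "(1, v) \<in> M" using D_partner_exists[OF M, of 1] by auto
  then have "1 < v" using D_irrefl[OF M v] D_bounds[OF M v] by simp
  then obtain a b where ab: "(a, b) \<in> M" "a < b"
    and shortest: "\<And>c d. (c, d) \<in> M \<Longrightarrow> c < d \<Longrightarrow> b - a \<le> d - c"
    using ex_has_least_nat[of "\<lambda>(a, b). (a, b) \<in> M \<and> a < b" "(1, v)" "\<lambda>(a, b). b - a"] v
    by auto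
  show ?thesis
  proof (rule ccontr)
    assume no_adjacent: "\<nexists>k. (k, Suc k) \<in> M"
    then have "Suc a < b" using ab by (metis Suc_lessI)
    then obtain c where c: "(Suc a, c) \<in> M"
      using D_partner_exists[OF M] D_bounds[OF M ab(1)] by fastforce
    have "c \<noteq> a" using no_adjacent D_sym[OF M c] by blast
    moreover have "c \<noteq> b" using D_partner_unique[OF M D_sym[OF M ab(1)], of "Suc a"] D_sym[OF M c] by auto
    moreover have "c \<noteq> Suc a" using D_irrefl[OF M c] by simp
    moreover have "\<not> c < a" using D_non_crossing[OF M D_sym[OF M c] ab(1)] \<open>Suc a < b\<close> by auto
    moreover have "\<not> b < c" using D_non_crossing[OF M ab(1) c] \<open>Suc a < b\<close> by auto
    ultimately have "Suc a < c" "c < b" by auto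
    then show False using shortest[OF c] by simp
  qed
qed

lemma D_partners_same_side:
  assumes M: "M \<in> D n" and x: "(k, x) \<in> M" and y: "(Suc k, y) \<in> M"
    and cd: "(c, d) \<in> M" "c < d" "{c, d} \<inter> {k, Suc k} = {}"
  shows "c < x \<and> x < d \<longleftrightarrow> c < y \<and> y < d"
proof -
  have "(x, w) \<in> M \<Longrightarrow> w = k" "(y, w) \<in> M \<Longrightarrow> w = Suc k" for w
    using D_partner_unique[OF M] D_sym[OF M x] D_sym[OF M y] by blast+
  then have "{c, d} \<inter> {x, y} = {}"
    using cd(1,3) D_sym[OF M cd(1)] by auto
  then have "c < x \<and> x < d \<longleftrightarrow> c < k \<and> k < d"
    using D_same_side[OF M D_sym[OF M x] cd(1,2)] cd(3) by auto
  also have "\<dots> \<longleftrightarrow> c < Suc k \<and> Suc k < d" using cd(3) by auto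
  also have "\<dots> \<longleftrightarrow> c < y \<and> y < d"
    using D_same_side[OF M y cd(1,2)] cd(3) \<open>{c, d} \<inter> {x, y} = {}\<close> by auto
  finally show ?thesis .
qed

lemma rewire_in_D:
  assumes M: "M \<in> D n" and x: "(k, x) \<in> M" and y: "(Suc k, y) \<in> M" and "x \<noteq> Suc k"
  shows "{p \<in> M. fst p \<notin> {k, Suc k} \<and> snd p \<notin> {k, Suc k}}
           \<union> {(k, Suc k), (Suc k, k), (x, y), (y, x)} \<in> D n" (is "?M' \<in> D n")
proof -
  have partner: "(k, w) \<in> M \<longleftrightarrow> w = x" "(w, k) \<in> M \<longleftrightarrow> w = x"
    "(Suc k, w) \<in> M \<longleftrightarrow> w = y" "(w, Suc k) \<in> M \<longleftrightarrow> w = y"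
    "(x, w) \<in> M \<longleftrightarrow> w = k" "(y, w) \<in> M \<longleftrightarrow> w = Suc k" for w
    using D_partner_unique[OF M] D_sym[OF M] x y by blast+
  have "x \<noteq> k" "y \<noteq> Suc k" using D_irrefl[OF M] x y by auto
  moreover have "y \<noteq> k" using partner(2)[of "Suc k"] y \<open>x \<noteq> Suc k\<close> by auto
  moreover have "x \<noteq> y" using partner(5)[of "Suc k"] partner(6)[of "Suc k"] y by auto
  ultimately have new: "{x, y} \<inter> {k, Suc k} = {}" "x \<noteq> y" using \<open>x \<noteq> Suc k\<close> by auto
  have mem_M': "(u, v) \<in> ?M' \<longleftrightarrow> ((u, v) \<in> M \<and> {u, v} \<inter> {k, Suc k} = {}) \<or>
      (u, v) \<in> {(k, Suc k), (Suc k, k), (x, y), (y, x)}" for u v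
    by auto
  have old: "{u, v} \<inter> {x, y} = {}" if "(u, v) \<in> M" "{u, v} \<inter> {k, Suc k} = {}" for u v
    using that partner(5)[of u] partner(6)[of u] partner(5)[of v] partner(6)[of v] D_sym[OF M that(1)]
    by auto
  note same_side = D_partners_same_side[OF M x y]
  show ?thesis
  proof (rule DI)
    fix u v assume "(u, v) \<in> ?M'"
    then show "1 \<le> u \<and> u \<le> 2*n \<and> 1 \<le> v \<and> v \<le> 2*n"
      using D_bounds[OF M] x y by auto
  next
    fix u v assume "(u, v) \<in> ?M'" then show "(v, u) \<in> ?M'" using D_sym[OF M] by auto
  next
    fix u show "(u, u) \<notin> ?M'" using D_irrefl[OF M] new by auto
  next
    fix u v w assume "(u, v) \<in> ?M'" "(u, w) \<in> ?M'"
    then show "v = w"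
      unfolding mem_M' using D_partner_unique[OF M, of u v w] old[of u v] old[of u w] new by auto
  next
    fix u assume u: "1 \<le> u" "u \<le> 2*n"
    show "\<exists>v. (u, v) \<in> ?M'"
    proof (cases "u \<in> {k, Suc k, x, y}")
      case True
      then have "(u, if u = k then Suc k else if u = Suc k then k else if u = x then y else x) \<in> ?M'"
        by auto
      then show ?thesis ..
    next
      case False
      then obtain w where w: "(u, w) \<in> M" using D_partner_exists[OF M u] by blast
      then have "w \<notin> {k, Suc k}" using partner False by auto
      then have "(u, w) \<in> ?M'" using w False by simp
      then show ?thesis ..
    qed
  next
    fix a b c d assume ab: "(a, b) \<in> ?M'" and cd: "(c, d) \<in> ?M'" and "a < c" "c < b" "b < d"
    then consider "(a, b) \<in> M" "(c, d) \<in> M" "{a, b, c, d} \<inter> {k, Suc k} = {}"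
      | "(a, b) \<in> M" "{a, b} \<inter> {k, Suc k} = {}" "{c, d} = {x, y}"
      | "(c, d) \<in> M" "{c, d} \<inter> {k, Suc k} = {}" "{a, b} = {x, y}"
      | "{a, b} = {k, Suc k} \<or> {c, d} = {k, Suc k}"
      | "{a, b} = {x, y}" "{c, d} = {x, y}"
      unfolding mem_M' by auto
    then show False
    proof cases
      case 1
      then show False using D_non_crossing[OF M] \<open>a < c\<close> \<open>c < b\<close> \<open>b < d\<close> by metis
    next
      case 2
      then show False using same_side[of a b] \<open>a < c\<close> \<open>c < b\<close> \<open>b < d\<close> by (auto simp: doubleton_eq_iff)
    next
      case 3
      then show False using same_side[of c d] \<open>a < c\<close> \<open>c < b\<close> \<open>b < d\<close> by (auto simp: doubleton_eq_iff)
    qed (use \<open>a < c\<close> \<open>c < b\<close> \<open>b < d\<close> in \<open>auto simp: doubleton_eq_iff\<close>)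
  qed
qed

lemma cap_in_D:
  assumes M: "M \<in> D (Suc n)" and k: "1 \<le> k" "k \<le> 2*n + 1"
  shows "cap k M \<in> D n"
proof -
  obtain x where x: "(k, x) \<in> M" using D_partner_exists[OF M, of k] k by auto
  obtain y where y: "(Suc k, y) \<in> M" using D_partner_exists[OF M, of "Suc k"] k by auto
  have partner: "(k, w) \<in> M \<longleftrightarrow> w = x" "(Suc k, w) \<in> M \<longleftrightarrow> w = y" for w
    using D_partner_unique[OF M] x y by blast+
  let ?M' = "{p \<in> M. fst p \<notin> {k, Suc k} \<and> snd p \<notin> {k, Suc k}}
               \<union> {(k, Suc k), (Suc k, k), (x, y), (y, x)}"
  show ?thesis
  proof (cases "x = Suc k")
    case True
    have "cap k M = remove_arc k M"
      by (auto simp: mem_cap_iff mem_remove_arc_iff partner True shift_neq)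
    then show ?thesis using remove_arc_in_D[OF M] x True by simp
  next
    case False
    have "cap k M = remove_arc k ?M'"
      using D_sym[OF M] by (auto simp: mem_cap_iff mem_remove_arc_iff partner shift_neq)
    moreover have "?M' \<in> D (Suc n)" by (rule rewire_in_D[OF M x y False])
    ultimately show ?thesis using remove_arc_in_D[of ?M' n k] by simp
  qed
qed

lemma cap_l_self [simp]: "cap k (l k M) = M"
  by (auto simp: mem_cap_iff mem_l_iff shift_neq)

lemma cap_Suc_l:
  assumes M: "M \<in> D n"
  shows "cap (Suc k) (l k M) = M"
proof -
  have "shift (Suc k) u = k \<longleftrightarrow> u = k" "u \<noteq> k \<Longrightarrow> unshift k (shift (Suc k) u) = u"
    "unshift k (Suc (Suc k)) = k" for u
    by (auto simp: shift_def unshift_def)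
  note shift_facts = this shift_neq
  show ?thesis
  proof (intro set_eqI, clarify)
    fix u v
    show "(u, v) \<in> cap (Suc k) (l k M) \<longleftrightarrow> (u, v) \<in> M"
    proof (cases "u = k \<or> v = k")
      case True
      then show ?thesis
        unfolding mem_cap_iff mem_l_iff using D_sym[OF M] D_irrefl[OF M] by (auto simp: shift_facts)
    qed (unfold mem_cap_iff mem_l_iff, simp add: shift_facts)
  qed
qed

lemma cap_l_Suc:
  assumes M: "M \<in> D n"
  shows "cap k (l (Suc k) M) = M"
proof -
  have "shift k u = Suc (Suc k) \<longleftrightarrow> u = k" "unshift (Suc k) (shift k u) = u" "unshift (Suc k) k = k" for u
    by (auto simp: shift_def unshift_def)
  note shift_facts = this shift_neq
  show ?thesis
  proof (intro set_eqI, clarify)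
    fix u v
    show "(u, v) \<in> cap k (l (Suc k) M) \<longleftrightarrow> (u, v) \<in> M"
    proof (cases "u = k \<or> v = k")
      case True
      then show ?thesis
        unfolding mem_cap_iff mem_l_iff using D_sym[OF M] D_irrefl[OF M] by (auto simp: shift_facts)
    qed (unfold mem_cap_iff mem_l_iff, simp add: shift_facts)
  qed
qed

lemma cap_l_below:
  assumes "i + 2 \<le> k"
  shows "cap k (l i M) = l i (cap (k - 2) M)"
proof -
  have "shift k u = i \<longleftrightarrow> u = i" "shift k u = Suc i \<longleftrightarrow> u = Suc i"
    "u \<noteq> i \<Longrightarrow> u \<noteq> Suc i \<Longrightarrow> unshift i (shift k u) = shift (k - 2) (unshift i u)"
    "unshift i k = k - 2" "unshift i (Suc k) = Suc (k - 2)" for u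
    using assms by (auto simp: shift_def unshift_def)
  then show ?thesis
    using assms by (auto simp: mem_cap_iff mem_l_iff)
qed

lemma cap_l_above:
  assumes "k + 2 \<le> i"
  shows "cap k (l i M) = l (i - 2) (cap k M)"
proof -
  have "shift k u = i \<longleftrightarrow> u = i - 2" "shift k u = Suc i \<longleftrightarrow> u = Suc (i - 2)"
    "u \<noteq> i - 2 \<Longrightarrow> u \<noteq> Suc (i - 2) \<Longrightarrow> unshift i (shift k u) = shift k (unshift (i - 2) u)"
    "unshift i k = k" "unshift i (Suc k) = Suc k" for u
    using assms by (auto simp: shift_def unshift_def)
  then show ?thesis
    using assms by (auto simp: mem_cap_iff mem_l_iff)
qed

section \<open>Restricted sequences\<close>

lemma length_rseq [simp]: "length (rseq m M) = m"
  by (induction m arbitrary: M) (auto simp: Let_def)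

lemma rseq_Suc:
  "rseq (Suc m) M = (LEAST k. (k, Suc k) \<in> M) # rseq m (remove_arc (LEAST k. (k, Suc k) \<in> M) M)"
  by (simp add: Let_def)

lemma Least_adjacent_arc_in_D:
  assumes "M \<in> D (Suc m)"
  shows "(LEAST k. (k, Suc k) \<in> M, Suc (LEAST k. (k, Suc k) \<in> M)) \<in> M"
  using D_Suc_has_adjacent_arc[OF assms] by (rule exE) (rule LeastI)

lemma rseq_inj_on_D: "M \<in> D m \<Longrightarrow> N \<in> D m \<Longrightarrow> rseq m M = rseq m N \<Longrightarrow> M = N"
proof (induction m arbitrary: M N)
  case 0
  then show ?case by (simp add: D_0)
next
  case (Suc m)
  define k where "k = (LEAST k. (k, Suc k) \<in> M)"
  have "k = (LEAST k. (k, Suc k) \<in> N)" and rest: "rseq m (remove_arc k M) = rseq m (remove_arc k N)"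
    using Suc.prems(3) unfolding rseq_Suc k_def by auto
  then have M: "(k, Suc k) \<in> M" and N: "(k, Suc k) \<in> N"
    using Least_adjacent_arc_in_D[OF Suc.prems(1)] Least_adjacent_arc_in_D[OF Suc.prems(2)] k_def
    by simp_all
  have "remove_arc k M = remove_arc k N"
    using Suc.IH[OF remove_arc_in_D[OF Suc.prems(1) M] remove_arc_in_D[OF Suc.prems(2) N] rest] .
  then show ?case using l_remove_arc[OF Suc.prems(1) M] l_remove_arc[OF Suc.prems(2) N] by metis
qed

lemma length_restricted: "restricted m s \<Longrightarrow> length s = m"
  by (auto simp: restricted_def)

lemma
  assumes "restricted m s"
  shows e_in_D: "e s \<in> D m" and rseq_e: "rseq m (e s) = s"
proof -
  obtain M where M: "M \<in> D m" "rseq m M = s" using assms unfolding restricted_def by blast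
  have "e s = M"
    unfolding e_def length_restricted[OF assms]
  proof (rule the_equality)
    show "M \<in> D m \<and> rseq m M = s" using M by simp
    show "N = M" if "N \<in> D m \<and> rseq m N = s" for N
      using rseq_inj_on_D[of N m M] that M by simp
  qed
  with M show "e s \<in> D m" "rseq m (e s) = s" by simp_all
qed

lemma restricted_0_iff: "restricted 0 s \<longleftrightarrow> s = []"
  by (auto simp: restricted_def D_0)

lemma e_Nil: "e [] = {}"
  using e_in_D[of 0 "[]"] by (simp add: restricted_0_iff D_0)

definition next_bound :: "nat list \<Rightarrow> nat" where
  "next_bound s = (if s = [] then 1 else Suc (hd s))"

text \<open>\<open>k \<le> next_bound s'\<close> since an adjacent arc \<open>(k', k' + 1)\<close> of \<open>e s'\<close> with \<open>k' + 1 < k\<close>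
  would survive in \<open>e s\<close>, contradicting the minimality of \<open>k\<close>.\<close>

lemma restricted_SucE:
  assumes "restricted (Suc m) s"
  obtains k s' where "s = k # s'" "restricted m s'" "e s = l k (e s')"
    "1 \<le> k" "Suc k \<le> 2 * Suc m" "k \<le> next_bound s'"
proof -
  define M where "M = e s"
  have M: "M \<in> D (Suc m)" "rseq (Suc m) M = s" using e_in_D[OF assms] rseq_e[OF assms] M_def by auto
  define k where "k = (LEAST k. (k, Suc k) \<in> M)"
  have kM: "(k, Suc k) \<in> M" using Least_adjacent_arc_in_D[OF M(1)] k_def by simp
  define M' where "M' = remove_arc k M"
  have M': "M' \<in> D m" "l k M' = M"
    using remove_arc_in_D[OF M(1) kM] l_remove_arc[OF M(1) kM] M'_def by auto
  define s' where "s' = rseq m M'"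
  have s: "s = k # s'" using M(2) unfolding rseq_Suc k_def[symmetric] M'_def s'_def by simp
  have s': "restricted m s'" unfolding restricted_def s'_def using M' by blast
  have e_s': "e s' = M'" using rseq_inj_on_D[OF e_in_D[OF s'] M'(1)] rseq_e[OF s'] s'_def by simp
  have k_bounds: "1 \<le> k" "Suc k \<le> 2 * Suc m" using D_bounds[OF M(1) kM] by auto
  have "k \<le> next_bound s'"
  proof (cases m)
    case 0
    then show ?thesis using k_bounds s'_def by (simp add: next_bound_def)
  next
    case (Suc m')
    define k' where "k' = (LEAST k. (k, Suc k) \<in> M')"
    have hd: "hd s' = k'" and "s' \<noteq> []" unfolding s'_def Suc rseq_Suc k'_def by simp_all
    have "(k', Suc k') \<in> M'" using Least_adjacent_arc_in_D[of M' m'] M'(1) Suc k'_def by simp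
    then have "(shift k k', shift k (Suc k')) \<in> M"
      using M'(2) by (auto simp: mem_l_iff shift_neq)
    then have "\<not> Suc k' < k" using not_less_Least[of k' "\<lambda>k. (k, Suc k) \<in> M"]
      unfolding k_def[symmetric] by (auto simp: shift_def split: if_splits)
    then show ?thesis using hd \<open>s' \<noteq> []\<close> by (simp add: next_bound_def)
  qed
  moreover have "e s = l k (e s')" using e_s' M'(2) M_def by simp
  ultimately show ?thesis using that s s' k_bounds by blast
qed

lemma next_bound_le:
  assumes "restricted m s"
  shows "next_bound s \<le> 2*m + 1" and "s \<noteq> [] \<Longrightarrow> next_bound s \<le> 2*m"
proof -
  show "s \<noteq> [] \<Longrightarrow> next_bound s \<le> 2*m"
  proof -
    assume "s \<noteq> []"
    then obtain m' where m': "m = Suc m'" using length_restricted[OF assms] by (cases m) auto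
    obtain k s' where "s = k # s'" "Suc k \<le> 2 * Suc m'"
      using restricted_SucE[OF assms[unfolded m']] by metis
    then show ?thesis using m' by (simp add: next_bound_def)
  qed
  then show "next_bound s \<le> 2*m + 1" by (cases "s = []") (auto simp: next_bound_def)
qed

lemma lex_less_Cons:
  "lex_less (b # \<beta>) (a # \<alpha>) \<longleftrightarrow> length \<beta> = length \<alpha> \<and> (b < a \<or> b = a \<and> lex_less \<beta> \<alpha>)"
proof
  assume "lex_less (b # \<beta>) (a # \<alpha>)"
  then obtain i where i: "i < Suc (length \<alpha>)" "take i (b # \<beta>) = take i (a # \<alpha>)"
      "(b # \<beta>) ! i < (a # \<alpha>) ! i" and len: "length \<beta> = length \<alpha>"
    unfolding lex_less_def by auto
  show "length \<beta> = length \<alpha> \<and> (b < a \<or> b = a \<and> lex_less \<beta> \<alpha>)"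
  proof (cases i)
    case 0
    then show ?thesis using i len by simp
  next
    case (Suc i')
    then have "b = a" "lex_less \<beta> \<alpha>" using i len unfolding lex_less_def by auto
    then show ?thesis using len by simp
  qed
next
  assume "length \<beta> = length \<alpha> \<and> (b < a \<or> b = a \<and> lex_less \<beta> \<alpha>)"
  then show "lex_less (b # \<beta>) (a # \<alpha>)"
    unfolding lex_less_def
    by (metis Suc_less_eq length_Cons nth_Cons_0 nth_Cons_Suc take_0 take_Suc_Cons zero_less_Suc)
qed

lemma next_bound_ge2:
  assumes "restricted m s" "2 \<le> next_bound s"
  shows "s \<noteq> []" "Suc (hd s) = next_bound s" "m = Suc (m - 1)" "next_bound s \<le> 2*m"
proof -
  show "s \<noteq> []" using assms(2) by (auto simp: next_bound_def)
  then show "Suc (hd s) = next_bound s" "next_bound s \<le> 2*m"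
    using next_bound_le(2)[OF assms(1)] by (simp_all add: next_bound_def)
  then show "m = Suc (m - 1)" using assms(2) by simp
qed

lemma e_1: "e [1] = l 1 {}"
proof -
  have in_D: "l 1 {} \<in> D 1" using l_in_D[of "{}" 0 1] by (simp add: D_0)
  have "(LEAST k. (k, Suc k) \<in> l 1 {}) = 1"
    by (rule Least_equality) (auto simp: mem_l_iff)
  then have rseq: "rseq 1 (l 1 {}) = [1]" by (simp add: rseq_Suc[of 0, simplified])
  then have r: "restricted 1 [1]" unfolding restricted_def using in_D by blast
  then show ?thesis using rseq_inj_on_D[OF e_in_D[OF r] in_D] rseq_e[OF r] rseq by simp
qed

section \<open>Counting loops\<close>

lemma card_image_eq_if_same_kernel:
  assumes "\<And>a b. a \<in> A \<Longrightarrow> b \<in> A \<Longrightarrow> f a = f b \<longleftrightarrow> g a = g b"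
  shows "card (f ` A) = card (g ` A)"
proof -
  let ?P = "(\<lambda>a. (f a, g a)) ` A"
  have "inj_on fst ?P" "inj_on snd ?P" using assms by (auto simp: inj_on_def)
  moreover have "fst ` ?P = f ` A" "snd ` ?P = g ` A" by force+
  ultimately show ?thesis by (metis card_image)
qed

lemma sym_rtrancl_Image_eq_iff:
  assumes "sym R"
  shows "R\<^sup>* `` {a} = R\<^sup>* `` {b} \<longleftrightarrow> (a, b) \<in> R\<^sup>*"
proof
  assume "R\<^sup>* `` {a} = R\<^sup>* `` {b}"
  then show "(a, b) \<in> R\<^sup>*" by blast
next
  assume ab: "(a, b) \<in> R\<^sup>*"
  moreover have "(b, a) \<in> R\<^sup>*" using ab sym_rtrancl[OF assms] by (auto dest: symD)
  ultimately show "R\<^sup>* `` {a} = R\<^sup>* `` {b}" by (auto intro: rtrancl_trans)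
qed

lemma loops_eq_card_image:
  assumes "sym (M \<union> N)"
    and "\<And>a b. a \<in> {1..2*n} \<Longrightarrow> b \<in> {1..2*n} \<Longrightarrow> F a = F b \<longleftrightarrow> (a, b) \<in> (M \<union> N)\<^sup>*"
  shows "loops n M N = card (F ` {1..2*n})"
proof -
  let ?A = "{1..2*n}" and ?R = "M \<union> N"
  let ?E = "?R\<^sup>* \<inter> (?A \<times> ?A)"
  have "?E `` {a} = ?E `` {b} \<longleftrightarrow> ?R\<^sup>* `` {a} = ?R\<^sup>* `` {b}" if "a \<in> ?A" "b \<in> ?A" for a b
    using that sym_rtrancl_Image_eq_iff[OF assms(1), of a b] by blast
  then have "card ((\<lambda>a. ?E `` {a}) ` ?A) = card (F ` ?A)"
    using sym_rtrancl_Image_eq_iff[OF assms(1)] assms(2) by (intro card_image_eq_if_same_kernel) auto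
  moreover have "?A // ?E = (\<lambda>a. ?E `` {a}) ` ?A" unfolding quotient_def by auto
  ultimately show ?thesis unfolding loops_def by simp
qed

lemma loops_eq_card_components:
  "sym (M \<union> N) \<Longrightarrow> loops n M N = card ((\<lambda>a. (M \<union> N)\<^sup>* `` {a}) ` {1..2*n})"
  by (rule loops_eq_card_image) (simp_all add: sym_rtrancl_Image_eq_iff)

context
  fixes n j z N
  assumes z: "z \<in> D (Suc n)" and N: "N \<in> D n" and j: "1 \<le> j" "j \<le> 2*n + 1"
begin

lemma sym_cap_Un: "sym (cap j z \<union> N)"
  using sym_D[OF cap_in_D[OF z j]] sym_D[OF N] by (rule sym_Un)

lemma sym_Un_l: "sym (z \<union> l j N)"
  using sym_D[OF z] sym_D[OF l_in_D[OF N j]] by (rule sym_Un)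

text \<open>A path through the capped points \<open>j, j + 1\<close> of \<open>z\<close> is replaced by a path through the
  arc \<open>(j, j + 1)\<close> of \<open>l j N\<close>.\<close>

lemma rtrancl_cap_Un_imp_shift:
  assumes "(p, p') \<in> (cap j z \<union> N)\<^sup>*"
  shows "(shift j p, shift j p') \<in> (z \<union> l j N)\<^sup>*"
  using assms
proof (induction rule: rtrancl_induct)
  case (step b c)
  let ?G = "z \<union> l j N"
  have jj: "(j, Suc j) \<in> ?G" "(Suc j, j) \<in> ?G" by (simp_all add: mem_l_iff)
  consider "(b, c) \<in> N" | "(shift j b, shift j c) \<in> z"
    | "(j, shift j b) \<in> z" "(Suc j, shift j c) \<in> z" | "(j, shift j c) \<in> z" "(Suc j, shift j b) \<in> z"
    using step(2) unfolding Un_iff mem_cap_iff by blast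
  then have "(shift j b, shift j c) \<in> ?G\<^sup>*"
  proof cases
    case 1
    then show ?thesis by (simp add: mem_l_iff shift_neq r_into_rtrancl)
  next
    case 3
    then have "(shift j b, j) \<in> ?G" "(Suc j, shift j c) \<in> ?G" using D_sym[OF z] by blast+
    then show ?thesis using jj by (meson converse_rtrancl_into_rtrancl r_into_rtrancl)
  next
    case 4
    then have "(shift j b, Suc j) \<in> ?G" "(j, shift j c) \<in> ?G" using D_sym[OF z] by blast+
    then show ?thesis using jj by (meson converse_rtrancl_into_rtrancl r_into_rtrancl)
  qed auto
  with step.IH show ?case by (rule rtrancl_trans)
qed simp

lemma unshift_in_cap_Un:
  assumes "(w, w') \<in> z \<union> l j N" "w \<notin> {j, Suc j}" "w' \<notin> {j, Suc j}"
  shows "(unshift j w, unshift j w') \<in> cap j z \<union> N"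
  using assms by (auto simp: mem_cap_iff mem_l_iff shift_unshift)

lemma unshift_in_points: "w \<in> {1..2 * Suc n} \<Longrightarrow> w \<notin> {j, Suc j} \<Longrightarrow> unshift j w \<in> {1..2*n}"
  using j by (auto simp: unshift_def)

lemma shift_in_points: "b \<in> {1..2*n} \<Longrightarrow> shift j b \<in> {1..2 * Suc n}"
  using j by (auto simp: shift_def)

text \<open>The arcs \<open>(j, j + 1)\<close> of \<open>z\<close> and of \<open>l j N\<close> form a loop of their own; the other loops
  avoid \<open>j, j + 1\<close> and are shifted loops of \<open>cap j z \<union> N\<close>.\<close>

lemma loops_l_closed:
  assumes jz: "(j, Suc j) \<in> z"
  shows "loops (Suc n) z (l j N) = Suc (loops n (cap j z) N)"
proof -
  let ?G = "z \<union> l j N" and ?C = "\<lambda>b. (cap j z \<union> N)\<^sup>* `` {b}"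
  let ?A = "{1..2 * Suc n}" and ?B = "{1..2*n}"
  have stays: "b \<in> {j, Suc j}" if "(a, b) \<in> ?G\<^sup>*" "a \<in> {j, Suc j}" for a b
    using that
  proof (induction rule: rtrancl_induct)
    case (step b c)
    have "(j, w) \<in> z \<Longrightarrow> w = Suc j" "(Suc j, w) \<in> z \<Longrightarrow> w = j" for w
      using D_partner_unique[OF z] jz D_sym[OF z jz] by blast+
    with step show ?case by (auto simp: mem_l_iff)
  qed
  have avoids: "b \<notin> {j, Suc j}" if "(a, b) \<in> ?G\<^sup>*" "a \<notin> {j, Suc j}" for a b
    using stays[of b a] that sym_rtrancl[OF sym_Un_l] by (auto dest: symD)
  have unshift_path: "(unshift j a, unshift j b) \<in> (cap j z \<union> N)\<^sup>*"
    if "(a, b) \<in> ?G\<^sup>*" "a \<notin> {j, Suc j}" for a b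
    using that
  proof (induction rule: rtrancl_induct)
    case (step b c)
    then have "b \<notin> {j, Suc j}" "c \<notin> {j, Suc j}" using avoids by (blast intro: rtrancl_into_rtrancl)+
    then show ?case using unshift_in_cap_Un step by (meson rtrancl.rtrancl_into_rtrancl)
  qed simp
  define F where "F a = (if a \<in> {j, Suc j} then None else Some (?C (unshift j a)))" for a
  have "F a = F b \<longleftrightarrow> (a, b) \<in> ?G\<^sup>*" if "a \<in> ?A" "b \<in> ?A" for a b
  proof (cases "a \<in> {j, Suc j}"; cases "b \<in> {j, Suc j}")
    assume "a \<in> {j, Suc j}" "b \<in> {j, Suc j}"
    moreover have "(j, Suc j) \<in> ?G" "(Suc j, j) \<in> ?G" by (auto simp: mem_l_iff)
    ultimately show ?thesis unfolding F_def by auto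
  next
    assume ab: "a \<notin> {j, Suc j}" "b \<notin> {j, Suc j}"
    have "F a = F b \<longleftrightarrow> (unshift j a, unshift j b) \<in> (cap j z \<union> N)\<^sup>*"
      unfolding F_def using ab sym_rtrancl_Image_eq_iff[OF sym_cap_Un] by simp
    also have "\<dots> \<longleftrightarrow> (a, b) \<in> ?G\<^sup>*"
      using unshift_path[of a b] ab rtrancl_cap_Un_imp_shift[of "unshift j a" "unshift j b"]
      by (auto simp: shift_unshift)
    finally show ?thesis .
  qed (use stays avoids in \<open>auto simp: F_def\<close>)
  then have "loops (Suc n) z (l j N) = card (F ` ?A)"
    by (intro loops_eq_card_image sym_Un_l)
  also have "F ` ?A = insert None (Some ` ?C ` ?B)"
  proof
    show "F ` ?A \<subseteq> insert None (Some ` ?C ` ?B)" using unshift_in_points by (auto simp: F_def)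
    have "None = F j" "j \<in> ?A" using j by (simp_all add: F_def)
    moreover have "Some (?C b) = F (shift j b)" "shift j b \<in> ?A" if "b \<in> ?B" for b
      using shift_in_points[OF that] by (simp_all add: F_def shift_neq)
    ultimately show "insert None (Some ` ?C ` ?B) \<subseteq> F ` ?A" by blast
  qed
  also have "card (insert None (Some ` ?C ` ?B)) = Suc (card (?C ` ?B))"
    by (simp add: card_image)
  also have "card (?C ` ?B) = loops n (cap j z) N"
    using loops_eq_card_components[OF sym_cap_Un] by simp
  finally show ?thesis .
qed

text \<open>Here \<open>j\<close> and \<open>j + 1\<close> lie on the loop through their partners \<open>x\<close> and \<open>y\<close>; collapsing
  \<open>j \<mapsto> x\<close>, \<open>j + 1 \<mapsto> y\<close> maps the loops onto those of \<open>cap j z \<union> N\<close>, where \<open>x\<close> and \<open>y\<close> are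
  joined by an arc.\<close>

lemma loops_l_open:
  assumes jz: "(j, Suc j) \<notin> z"
  shows "loops (Suc n) z (l j N) = loops n (cap j z) N"
proof -
  let ?G = "z \<union> l j N" and ?G' = "cap j z \<union> N" and ?C = "\<lambda>b. (cap j z \<union> N)\<^sup>* `` {b}"
  let ?A = "{1..2 * Suc n}" and ?B = "{1..2*n}"
  obtain x where x: "(j, x) \<in> z" using D_partner_exists[OF z, of j] j by auto
  obtain y where y: "(Suc j, y) \<in> z" using D_partner_exists[OF z, of "Suc j"] j by auto
  have partner: "(j, w) \<in> z \<longleftrightarrow> w = x" "(w, j) \<in> z \<longleftrightarrow> w = x" "(Suc j, w) \<in> z \<longleftrightarrow> w = y"
    "(w, Suc j) \<in> z \<longleftrightarrow> w = y" for w
    using D_partner_unique[OF z] D_sym[OF z] x y by blast+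
  have x_out: "x \<notin> {j, Suc j}" and y_out: "y \<notin> {j, Suc j}"
    using D_irrefl[OF z x] D_irrefl[OF z y] jz x partner(2)[of "Suc j"] y by auto
  define \<rho> where "\<rho> w = unshift j (if w = j then x else if w = Suc j then y else w)" for w
  have partners_joined: "(unshift j x, unshift j y) \<in> ?G'" "(unshift j y, unshift j x) \<in> ?G'"
    using x y x_out y_out by (auto simp: mem_cap_iff shift_unshift)
  have \<rho>_edge: "(\<rho> w, \<rho> w') \<in> ?G'\<^sup>*" if edge: "(w, w') \<in> ?G" for w w'
  proof (cases "w \<in> {j, Suc j} \<or> w' \<in> {j, Suc j}")
    case True
    then consider "(w, w') \<in> z" | "w = j" "w' = Suc j" | "w = Suc j" "w' = j"
      using edge True unfolding Un_iff mem_l_iff by blast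
    then show ?thesis
    proof cases
      case 1
      then have "\<rho> w = \<rho> w'" using True partner x_out y_out by (auto simp: \<rho>_def)
      then show ?thesis by simp
    qed (use partners_joined in \<open>auto simp: \<rho>_def\<close>)
  next
    case False
    then show ?thesis using unshift_in_cap_Un[OF edge] by (auto simp: \<rho>_def)
  qed
  have \<rho>_path: "(\<rho> a, \<rho> b) \<in> ?G'\<^sup>*" if "(a, b) \<in> ?G\<^sup>*" for a b
    using that by (induction rule: rtrancl_induct) (auto intro: rtrancl_trans \<rho>_edge)
  have to_shift_\<rho>: "(a, shift j (\<rho> a)) \<in> ?G\<^sup>*" for a
  proof -
    have "(a, shift j (\<rho> a)) \<in> ?G \<or> shift j (\<rho> a) = a"
      using x y x_out y_out by (auto simp: \<rho>_def shift_unshift)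
    then show ?thesis by auto
  qed
  define F where "F a = ?C (\<rho> a)" for a
  have "F a = F b \<longleftrightarrow> (a, b) \<in> ?G\<^sup>*" for a b
  proof
    assume "F a = F b"
    then have "(\<rho> a, \<rho> b) \<in> ?G'\<^sup>*" unfolding F_def sym_rtrancl_Image_eq_iff[OF sym_cap_Un] .
    then have "(shift j (\<rho> a), shift j (\<rho> b)) \<in> ?G\<^sup>*" by (rule rtrancl_cap_Un_imp_shift)
    moreover have "(shift j (\<rho> b), b) \<in> ?G\<^sup>*"
      using to_shift_\<rho>[of b] sym_rtrancl[OF sym_Un_l] by (auto dest: symD)
    ultimately show "(a, b) \<in> ?G\<^sup>*" using to_shift_\<rho>[of a] by (meson rtrancl_trans)
  next
    assume "(a, b) \<in> ?G\<^sup>*"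
    then show "F a = F b" unfolding F_def sym_rtrancl_Image_eq_iff[OF sym_cap_Un] by (rule \<rho>_path)
  qed
  then have "loops (Suc n) z (l j N) = card (F ` ?A)"
    by (intro loops_eq_card_image sym_Un_l)
  also have "F ` ?A = ?C ` ?B"
  proof -
    have "x \<in> ?A" "y \<in> ?A" using D_bounds[OF z x] D_bounds[OF z y] by simp_all
    then have "\<rho> w \<in> ?B" if "w \<in> ?A" for w
      unfolding \<rho>_def using unshift_in_points that x_out y_out by (simp only: split: if_split) blast
    then have "\<rho> ` ?A \<subseteq> ?B" by (rule image_subsetI)
    moreover have "b = \<rho> (shift j b)" for b by (simp add: \<rho>_def shift_neq)
    then have "?B \<subseteq> \<rho> ` ?A" using shift_in_points by (metis image_eqI subsetI)
    ultimately have "\<rho> ` ?A = ?B" by (rule antisym)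
    moreover have "F ` ?A = ?C ` \<rho> ` ?A" unfolding F_def by (rule image_image[symmetric])
    ultimately show ?thesis by simp
  qed
  also have "card (?C ` ?B) = loops n (cap j z) N"
    using loops_eq_card_components[OF sym_cap_Un] by simp
  finally show ?thesis .
qed

end

lemma loops_l:
  assumes "z \<in> D (Suc n)" "N \<in> D n" "1 \<le> j" "j \<le> 2*n + 1"
  shows "loops (Suc n) z (l j N) = loops n (cap j z) N + (if (j, Suc j) \<in> z then 1 else 0)"
  using loops_l_closed[OF assms] loops_l_open[OF assms] by simp

section \<open>The Markov form\<close>

lemma markov_basis:
  assumes "M \<in> D n"
  shows "markov n (basis M) v = (\<Sum>N\<in>D n. v N * q ^ loops n M N)"
proof -
  have "markov n (basis M) v = (\<Sum>M'\<in>D n. if M' = M then (\<Sum>N\<in>D n. v N * q ^ loops n M' N) else 0)"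
    unfolding markov_def basis_def by (intro sum.cong) (auto simp: sum_distrib_left)
  also have "\<dots> = (\<Sum>N\<in>D n. v N * q ^ loops n M N)"
    using assms finite_D by (simp add: sum.delta)
  finally show ?thesis .
qed

lemma markov_diff_smult:
  "markov n u (\<lambda>N. v N - c * w N) = markov n u v - c * markov n u w"
  unfolding markov_def by (simp add: algebra_simps sum_subtractf sum_distrib_left)

lemma lin_l_l [simp]: "lin_l k v (l k M) = v M"
  unfolding lin_l_def by simp

lemma lin_l_not_in_range: "N \<notin> range (l k) \<Longrightarrow> lin_l k v N = 0"
  unfolding lin_l_def by (auto intro: sum.neutral)

lemma lin_l_basis: "lin_l k (basis M) = basis (l k M)"
proof
  fix N
  show "lin_l k (basis M) N = basis (l k M) N"
  proof (cases "N \<in> range (l k)")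
    case True
    then obtain M' where "N = l k M'" by auto
    then show ?thesis by (simp add: basis_def)
  qed (auto simp: lin_l_not_in_range basis_def)
qed

lemma markov_basis_lin_l:
  assumes z: "z \<in> D (Suc n)" and k: "1 \<le> k" "k \<le> 2*n + 1"
  shows "markov (Suc n) (basis z) (lin_l k v) =
    (if (k, Suc k) \<in> z then q else 1) * markov n (basis (cap k z)) v"
proof -
  have "lin_l k v N = 0" if "N \<in> D (Suc n) - l k ` D n" for N
  proof (rule lin_l_not_in_range, rule notI)
    assume "N \<in> range (l k)"
    then obtain M where M: "N = l k M" by auto
    then have "(k, Suc k) \<in> N" by (simp add: mem_l_iff)
    then have "M \<in> D n" using remove_arc_in_D[of N n k] that M by simp
    then show False using that M by simp
  qed
  then have "markov (Suc n) (basis z) (lin_l k v) = (\<Sum>N\<in>l k ` D n. lin_l k v N * q ^ loops (Suc n) z N)"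
    unfolding markov_basis[OF z] using l_in_D k finite_D
    by (intro sum.mono_neutral_right) auto
  also have "\<dots> = (\<Sum>N\<in>D n. v N * q ^ loops (Suc n) z (l k N))"
    by (subst sum.reindex) (auto simp: inj_on_def)
  also have "\<dots> = (\<Sum>N\<in>D n. (if (k, Suc k) \<in> z then q else 1) * (v N * q ^ loops n (cap k z) N))"
    by (intro sum.cong refl) (simp add: loops_l[OF z _ k] power_add)
  also have "\<dots> = (if (k, Suc k) \<in> z then q else 1) * markov n (basis (cap k z)) v"
    by (simp add: markov_basis[OF cap_in_D[OF z k]] sum_distrib_left)
  finally show ?thesis .
qed

fun Delta_poly :: "nat \<Rightarrow> rat poly" where
  "Delta_poly 0 = 1"
| "Delta_poly (Suc 0) = [:0, 1:]"
| "Delta_poly (Suc (Suc k)) = [:0, 1:] * Delta_poly (Suc k) - Delta_poly k"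

lemma degree_Delta_poly: "degree (Delta_poly k) = k"
proof (induction k rule: Delta_poly.induct)
  case (3 k)
  then have "Delta_poly (Suc k) \<noteq> 0" by (metis degree_0 nat.distinct(1))
  then have "degree ([:0, 1:] * Delta_poly (Suc k)) = Suc (Suc k)"
    using "3.IH"(1) by (simp add: degree_mult_eq)
  then show ?case
    using "3.IH"(2) degree_add_eq_left[of "- Delta_poly k" "[:0, 1:] * Delta_poly (Suc k)"] by simp
qed simp_all

lemma Delta_eq_to_fract: "Delta k = to_fract (Delta_poly k)"
  by (induction k rule: Delta_poly.induct) (simp_all add: q_def to_fract_def One_fract_def)

lemma Delta_nonzero: "Delta k \<noteq> 0"
proof -
  have "Delta_poly k \<noteq> 0"
    using degree_Delta_poly[of k] by (cases k) auto
  then show ?thesis by (simp add: Delta_eq_to_fract)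
qed

lemma Delta_rec: "2 \<le> k \<Longrightarrow> Delta k = q * Delta (k - 1) - Delta (k - 2)"
  by (cases k rule: Delta.cases) simp_all

section \<open>Orthogonality of \<open>e'\<close>\<close>

lemma e'_Cons:
  assumes "1 \<le> b" "b \<le> next_bound \<alpha>"
  shows "e' (b # \<alpha>) =
    (if 2 \<le> b then (\<lambda>N. lin_l b (e' \<alpha>) N - Delta (b - 2) / Delta (b - 1) * e' ((b - 1) # \<alpha>) N)
     else lin_l 1 (e' \<alpha>))"
proof (cases \<alpha>)
  case Nil
  then have "b = 1" using assms by (simp add: next_bound_def)
  moreover have "e' [1] = lin_l 1 (e' [])" by (simp only: e'.simps e_1 lin_l_basis)
  ultimately show ?thesis using Nil by simp
next
  case (Cons c \<alpha>')
  then show ?thesis using assms by (cases "2 \<le> b") auto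
qed

lemma markov_basis_e'_Cons:
  assumes \<alpha>: "restricted m \<alpha>" and y: "y \<in> D (Suc m)" and b: "1 \<le> b" "b \<le> next_bound \<alpha>"
  shows "markov (Suc m) (basis y) (e' (b # \<alpha>)) =
    (if (b, Suc b) \<in> y then q else 1) * markov m (basis (cap b y)) (e' \<alpha>)
    - (if 2 \<le> b then Delta (b - 2) / Delta (b - 1) * markov (Suc m) (basis y) (e' ((b - 1) # \<alpha>))
       else 0)"
proof -
  have adjoint: "markov (Suc m) (basis y) (lin_l b (e' \<alpha>)) =
      (if (b, Suc b) \<in> y then q else 1) * markov m (basis (cap b y)) (e' \<alpha>)"
    using markov_basis_lin_l[OF y b(1)] b(2) next_bound_le(1)[OF \<alpha>] by simp
  show ?thesis
  proof (cases "2 \<le> b")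
    case True
    then have "markov (Suc m) (basis y) (e' (b # \<alpha>)) = markov (Suc m) (basis y) (lin_l b (e' \<alpha>))
        - Delta (b - 2) / Delta (b - 1) * markov (Suc m) (basis y) (e' ((b - 1) # \<alpha>))"
      using e'_Cons[OF b] by (simp only: if_True markov_diff_smult)
    then show ?thesis using adjoint True by simp
  next
    case False
    then have "b = 1" using b by simp
    then show ?thesis using e'_Cons[OF b] adjoint by simp
  qed
qed

text \<open>The hypothesis \<open>orth\<close> is the strengthening that makes the induction
  work; under it the pairings of \<open>l i z\<close> with \<open>e' (b # \<alpha>)\<close> for \<open>i \<ge> b + 2\<close>, \<open>i = b + 1\<close>,
  \<open>i = b\<close> and \<open>i < b\<close> are computed in this order, each from the previous ones at \<open>b - 1\<close>.\<close>

context
  fixes m :: nat and \<alpha> :: "nat list"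
  assumes \<alpha>: "restricted m \<alpha>"
    and orth: "\<forall>i z. \<alpha> \<noteq> [] \<longrightarrow> 1 \<le> i \<longrightarrow> i < hd \<alpha> \<longrightarrow> z \<in> D (m - 1) \<longrightarrow>
                 markov m (basis (l i z)) (e' \<alpha>) = 0"
begin

lemma markov_l_above_e'_Cons:
  "1 \<le> b \<Longrightarrow> b + 2 \<le> i \<Longrightarrow> i \<le> next_bound \<alpha> \<Longrightarrow> z \<in> D m \<Longrightarrow>
    markov (Suc m) (basis (l i z)) (e' (b # \<alpha>)) = 0"
proof (induction b arbitrary: z rule: less_induct)
  case (less b)
  have "2 \<le> next_bound \<alpha>" using less.prems by simp
  note nb = next_bound_ge2[OF \<alpha> this]
  have i: "1 \<le> i" "i \<le> 2*m + 1" using less.prems nb(4) by auto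
  have "cap b z \<in> D (m - 1)"
    using cap_in_D[of z "m - 1" b] less.prems nb(3,4) by simp
  then have "markov m (basis (cap b (l i z))) (e' \<alpha>) = 0"
    using orth[rule_format, of "i - 2" "cap b z"] cap_l_above[of b i z] less.prems nb(1,2) by simp
  moreover have "2 \<le> b \<Longrightarrow> markov (Suc m) (basis (l i z)) (e' ((b - 1) # \<alpha>)) = 0"
    using less by simp
  ultimately show ?case
    using markov_basis_e'_Cons[OF \<alpha> l_in_D[OF less.prems(4) i], of b] less.prems by simp
qed

lemma markov_l_Suc_e'_Cons:
  assumes b: "1 \<le> b" "Suc b \<le> next_bound \<alpha>" and z: "z \<in> D m"
  shows "markov (Suc m) (basis (l (Suc b) z)) (e' (b # \<alpha>)) = markov m (basis z) (e' \<alpha>)"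
proof -
  have "2 \<le> b \<Longrightarrow> markov (Suc m) (basis (l (Suc b) z)) (e' ((b - 1) # \<alpha>)) = 0"
    using markov_l_above_e'_Cons[of "b - 1" "Suc b" z] b z by simp
  moreover have "l (Suc b) z \<in> D (Suc m)"
    using l_in_D[OF z] b next_bound_le(1)[OF \<alpha>] by simp
  ultimately show ?thesis
    using markov_basis_e'_Cons[OF \<alpha> _ b(1)] b cap_l_Suc[OF z] by (simp add: mem_l_iff)
qed

lemma markov_l_self_e'_Cons:
  assumes b: "1 \<le> b" "b \<le> next_bound \<alpha>" and z: "z \<in> D m"
  shows "markov (Suc m) (basis (l b z)) (e' (b # \<alpha>)) = Delta b / Delta (b - 1) * markov m (basis z) (e' \<alpha>)"
proof -
  have "l b z \<in> D (Suc m)" using l_in_D[OF z] b next_bound_le(1)[OF \<alpha>] by simp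
  then have rec: "markov (Suc m) (basis (l b z)) (e' (b # \<alpha>)) = q * markov m (basis z) (e' \<alpha>)
    - (if 2 \<le> b then Delta (b - 2) / Delta (b - 1) * markov (Suc m) (basis (l b z)) (e' ((b - 1) # \<alpha>))
       else 0)"
    using markov_basis_e'_Cons[OF \<alpha> _ b] by (simp add: mem_l_iff)
  show ?thesis
  proof (cases "2 \<le> b")
    case True
    then have "markov (Suc m) (basis (l b z)) (e' ((b - 1) # \<alpha>)) = markov m (basis z) (e' \<alpha>)"
      using markov_l_Suc_e'_Cons[of "b - 1" z] b z by simp
    then have "markov (Suc m) (basis (l b z)) (e' (b # \<alpha>)) =
        (q - Delta (b - 2) / Delta (b - 1)) * markov m (basis z) (e' \<alpha>)"
      using rec True by (simp add: algebra_simps)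
    also have "q - Delta (b - 2) / Delta (b - 1) = Delta b / Delta (b - 1)"
      using Delta_nonzero[of "b - 1"] Delta_rec[OF True] by (simp add: field_simps)
    finally show ?thesis .
  next
    case False
    then have "b = 1" using b by simp
    then show ?thesis using rec by simp
  qed
qed

lemma markov_l_below_e'_Cons:
  "1 \<le> i \<Longrightarrow> i < b \<Longrightarrow> b \<le> next_bound \<alpha> \<Longrightarrow> z \<in> D m \<Longrightarrow>
    markov (Suc m) (basis (l i z)) (e' (b # \<alpha>)) = 0"
proof (induction b arbitrary: z rule: less_induct)
  case (less b)
  have i: "1 \<le> i" "i \<le> 2*m + 1" and b: "1 \<le> b" "2 \<le> b"
    using less.prems next_bound_le(1)[OF \<alpha>] by auto
  have lz: "l i z \<in> D (Suc m)" by (rule l_in_D[OF less.prems(4) i])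
  show ?case
  proof (cases "i + 2 \<le> b")
    case True
    have "2 \<le> next_bound \<alpha>" using True less.prems by simp
    note nb = next_bound_ge2[OF \<alpha> this]
    have "cap (b - 2) z \<in> D (m - 1)"
      using cap_in_D[of z "m - 1" "b - 2"] less.prems True nb(3,4) by simp
    then have "markov m (basis (cap b (l i z))) (e' \<alpha>) = 0"
      using orth[rule_format, of i "cap (b - 2) z"] cap_l_below[OF True] less.prems True nb(1,2) by simp
    moreover have "markov (Suc m) (basis (l i z)) (e' ((b - 1) # \<alpha>)) = 0"
      using less True by simp
    ultimately show ?thesis using markov_basis_e'_Cons[OF \<alpha> lz b(1)] less.prems b by simp
  next
    case False
    then have ib: "b = Suc i" using less.prems by simp
    have "markov (Suc m) (basis (l i z)) (e' ((b - 1) # \<alpha>)) =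
        Delta (b - 1) / Delta (b - 2) * markov m (basis z) (e' \<alpha>)"
      using markov_l_self_e'_Cons[of "b - 1" z] less.prems ib by simp
    then show ?thesis
      using markov_basis_e'_Cons[OF \<alpha> lz b(1)] less.prems b ib cap_Suc_l[OF less.prems(4)]
        Delta_nonzero[of "b - 1"] Delta_nonzero[of "b - 2"]
      by (simp add: mem_l_iff)
  qed
qed

end

lemma markov_e_e'_triangular:
  "restricted m \<alpha> \<Longrightarrow>
    (\<forall>i z. \<alpha> \<noteq> [] \<longrightarrow> 1 \<le> i \<longrightarrow> i < hd \<alpha> \<longrightarrow> z \<in> D (m - 1) \<longrightarrow>
       markov m (basis (l i z)) (e' \<alpha>) = 0) \<and>
    (\<forall>\<beta>. restricted m \<beta> \<longrightarrow> lex_less \<beta> \<alpha> \<longrightarrow> markov m (basis (e \<beta>)) (e' \<alpha>) = 0) \<and>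
    markov m (basis (e \<alpha>)) (e' \<alpha>) = (\<Prod>i<m. Delta (\<alpha> ! i) / Delta (\<alpha> ! i - 1))"
proof (induction m arbitrary: \<alpha>)
  case 0
  then have "\<alpha> = []" by (simp add: restricted_0_iff)
  moreover have "markov 0 (basis {}) (basis {}) = 1"
    by (simp add: markov_def D_0 loops_def basis_def)
  ultimately show ?case by (auto simp: restricted_0_iff lex_less_def e_Nil)
next
  case (Suc m)
  obtain a \<alpha>' where \<alpha>: "\<alpha> = a # \<alpha>'" "restricted m \<alpha>'" "e \<alpha> = l a (e \<alpha>')" "1 \<le> a"
      "a \<le> next_bound \<alpha>'"
    using restricted_SucE[OF Suc.prems] by metis
  note IH = Suc.IH[OF \<alpha>(2)]
  note below = markov_l_below_e'_Cons[OF \<alpha>(2) IH[THEN conjunct1]]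
  note self = markov_l_self_e'_Cons[OF \<alpha>(2) IH[THEN conjunct1] \<alpha>(4,5)]
  have lower: "markov (Suc m) (basis (e \<beta>)) (e' \<alpha>) = 0"
    if \<beta>: "restricted (Suc m) \<beta>" "lex_less \<beta> \<alpha>" for \<beta>
  proof -
    obtain b \<beta>' where \<beta>': "\<beta> = b # \<beta>'" "restricted m \<beta>'" "e \<beta> = l b (e \<beta>')" "1 \<le> b"
      using restricted_SucE[OF \<beta>(1)] by metis
    then have "b < a \<or> b = a \<and> lex_less \<beta>' \<alpha>'" using \<beta>(2) \<alpha>(1) by (simp add: lex_less_Cons)
    then show ?thesis
      using below[of b a "e \<beta>'"] self[OF e_in_D[OF \<beta>'(2)]] IH \<beta>' \<alpha> e_in_D[OF \<beta>'(2)] by auto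
  qed
  have "markov (Suc m) (basis (e \<alpha>)) (e' \<alpha>) = Delta a / Delta (a - 1) * markov m (basis (e \<alpha>')) (e' \<alpha>')"
    using self[OF e_in_D[OF \<alpha>(2)]] \<alpha>(1,3) by simp
  also have "\<dots> = (\<Prod>i<Suc m. Delta (\<alpha> ! i) / Delta (\<alpha> ! i - 1))"
    unfolding \<alpha>(1) prod.lessThan_Suc_shift using IH by simp
  finally show ?case using below[OF _ _ \<alpha>(5)] \<alpha>(1,4) lower by auto
qed

theorem mainTheorem2:
  fixes n :: nat and a b :: "nat list"
  assumes "n \<ge> 1" and "restricted n a" and "restricted n b"
  shows "(lex_less b a \<longrightarrow> markov n (basis (e b)) (e' a) = 0) \<and>
         markov n (basis (e a)) (e' a) = (\<Prod>i<n. Delta (a ! i) / Delta (a ! i - 1))"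
  using markov_e_e'_triangular[OF assms(2)] assms(3) by blast

end
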